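(* For all integers $m,n\ge1$, $$S_{m,n}(q)=\sum_{r=0}^{\lfloor m/2\rfloor}(-1)^r\left[\binom{m-1}{r}-\binom{m-1}{r-2}\right]\frac{(1-q^{(\frac{m+1}{2}-r)n})(1+(-1)^mq^{(\frac{m+1}{2}-r)(n+1)})q^{rn}}{(1-q^2)(1-q)^{m-1}(1-q^{\frac{m+1}{2}-r})}.$$
   Context: $q$ is an indeterminate and $q^{1/2}$ a fixed formal square root of $q$; identities are identities of rational functions in $q^{1/2}$. For integers $m,n\ge1$, $$S_{m,n}(q)=\sum_{k=1}^{n}\frac{1-q^{2k}}{1-q^2}\left(\frac{1-q^k}{1-q}\right)^{m-1}q^{\frac{m+1}{2}(n-k)}.$$ Binomial coefficients $\binom{a}{b}$ with integers $a,b$ are taken to be $0$ when $b<0$ or when $0\le a<b$. *)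

theory Defs
  imports "HOL-Computational_Algebra.Polynomial" "HOL-Computational_Algebra.Fraction_Field"
begin

type_synonym ratfun = "rat poly fract"

text \<open>The formal square root q^(1/2) of q; q itself is qh^2.\<close>
definition qh :: ratfun where
  "qh = Fract [:0, 1:] 1"

text \<open>q^(e/2), for a natural number e.\<close>
definition qhalf :: "nat \<Rightarrow> ratfun" where
  "qhalf e = qh ^ e"

text \<open>Integer binomial coefficient with the convention: 0 if b < 0, 0 if 0 \<le> a < b.\<close>
definition ibinom :: "int \<Rightarrow> int \<Rightarrow> rat" where
  "ibinom a b = (if b < 0 then 0 else (of_int a) gchoose (nat b))"

definition S :: "nat \<Rightarrow> nat \<Rightarrow> ratfun" where
  "S m n = (\<Sum>k=1..n. ((1 - qhalf (4*k)) / (1 - qhalf 4)) *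
              ((1 - qhalf (2*k)) / (1 - qhalf 2)) ^ (m - 1) *
              qhalf ((m + 1) * (n - k)))"

end

theory Submission
  imports Defs
begin

(* Write x = q^(1/2) and p = m - 1, so that with t = x^(2k) the k-th summand of S is
   (1 - t^2) (1 - t)^p x^((p+2)(n-k)) / ((1 - x^4) (1 - x^2)^p).  Expanding
   (1 - t^2) (1 - t)^p = \<Sum>_j c_j t^j with c_j = (-1)^j (C(p,j) - C(p,j-2)) and exchanging the
   sums writes S as \<Sum>_j c_j \<Sum>_k x^(2jk + (p+2)(n-k)).  The polynomial (1 - t^2) (1 - t)^p of
   degree p + 2 is self-reciprocal up to the sign (-1)^(p + 1), so c_(p+2-j) = (-1)^(p + 1) c_j and the
   middle coefficient vanishes.  Pairing j = r with j = p + 2 - r, the two inner sums become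
   x^(2rn) times the geometric sums \<Sum>_k z^(n-k) and \<Sum>_k z^(n+k) in z = x^(p+2-2r), whose
   closed forms give the r-th term of the right-hand side. *)

definition binom_diff_coeff :: "nat \<Rightarrow> nat \<Rightarrow> int" where
  "binom_diff_coeff p j =
     (-1)^j * (int (p choose j) - (if j < 2 then 0 else int (p choose (j - 2))))"

lemma one_minus_power_expansion:
  fixes t :: "'a::comm_ring_1"
  shows "(1 - t)^p = (\<Sum>j\<le>p. (-1)^j * of_nat (p choose j) * t^j)"
  using binomial_ring[of "- t" 1 p] by (simp add: power_minus' mult_ac)

lemma one_minus_square_times_power_expansion:
  fixes t :: "'a::comm_ring_1"
  shows "(1 - t^2) * (1 - t)^p = (\<Sum>j\<le>p + 2. of_int (binom_diff_coeff p j) * t^j)"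
proof -
  have low: "(1 - t)^p = (\<Sum>j\<le>p + 2. (-1)^j * of_nat (p choose j) * t^j)"
    by (simp add: one_minus_power_expansion binomial_eq_0)
  have high: "t^2 * (1 - t)^p =
      (\<Sum>j\<le>p + 2. (if j < 2 then 0 else (-1)^j * of_nat (p choose (j - 2))) * t^j)"
    by (simp add: one_minus_power_expansion sum.atMost_Suc_shift sum_distrib_left
        power2_eq_square mult_ac del: sum.atMost_Suc)
  have "(1 - t^2) * (1 - t)^p = (1 - t)^p - t^2 * (1 - t)^p"
    by (simp add: algebra_simps)
  also have "\<dots> = (\<Sum>j\<le>p + 2. of_int (binom_diff_coeff p j) * t^j)"
    unfolding high unfolding low sum_subtractf[symmetric]
    by (rule sum.cong) (simp_all add: binom_diff_coeff_def algebra_simps)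
  finally show ?thesis .
qed

lemma binom_diff_coeff_reflect:
  assumes "j \<le> p + 2"
  shows "binom_diff_coeff p (p + 2 - j) = (-1)^(p + 1) * binom_diff_coeff p j"
proof -
  have "int (p choose (p + 2 - j)) = (if j < 2 then 0 else int (p choose (j - 2)))"
    using assms binomial_symmetric[of "j - 2" p] by (auto simp: numeral_2_eq_2 Suc_diff_le)
  moreover have "(if p + 2 - j < 2 then 0 else int (p choose (p + 2 - j - 2))) = int (p choose j)"
    using assms binomial_symmetric[of j p] by (auto simp: binomial_eq_0)
  moreover have "(-1::int)^(p + 2 - j) = (-1)^(p + 1) * (-1) * (-1)^j"
    using assms by (simp add: minus_one_power_iff)
  ultimately show ?thesis
    unfolding binom_diff_coeff_def by (simp add: algebra_simps)
qed

lemma binom_diff_coeff_middle: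
  assumes "even p"
  shows "binom_diff_coeff p ((p + 2) div 2) = 0"
proof -
  have "p + 2 - (p + 2) div 2 = (p + 2) div 2" using assms by auto
  then have "binom_diff_coeff p ((p + 2) div 2) = - binom_diff_coeff p ((p + 2) div 2)"
    using binom_diff_coeff_reflect[of "(p + 2) div 2" p] assms by simp
  then show ?thesis by simp
qed

lemma sum_atLeast0_atMost_pairs:
  fixes f :: "nat \<Rightarrow> 'a::comm_monoid_add"
  assumes "N \<ge> 1" and "even N \<Longrightarrow> f (N div 2) = 0"
  shows "(\<Sum>j=0..N. f j) = (\<Sum>r=0..(N - 1) div 2. f r + f (N - r))"
proof -
  define A where "A = {0..(N - 1) div 2}"
  define B where "B = (\<lambda>r. N - r) ` A"
  have "inj_on (\<lambda>r. N - r) A" by (auto simp: A_def inj_on_def)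
  then have sum_B: "sum f B = (\<Sum>r\<in>A. f (N - r))"
    unfolding B_def by (simp add: sum.reindex)
  have finite_A: "finite A" and finite_B: "finite B" by (simp_all add: A_def B_def)
  have disjoint: "A \<inter> B = {}" using assms(1) by (auto simp: A_def B_def)
  have rest: "sum f ({0..N} - (A \<union> B)) = 0"
  proof (rule sum.neutral, intro ballI)
    fix j assume j: "j \<in> {0..N} - (A \<union> B)"
    then have "j \<le> N" "j \<notin> A" by auto
    moreover have "N - j \<notin> A"
    proof
      assume "N - j \<in> A"
      then have "N - (N - j) \<in> B" unfolding B_def by (rule imageI)
      with j \<open>j \<le> N\<close> show False by simp
    qed
    moreover have "N - 1 \<le> 2 * ((N - 1) div 2) + 1" by linarith
    ultimately have "N = 2 * j" by (simp add: A_def)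
    then have "even N" "j = N div 2" by simp_all
    then show "f j = 0" using assms(2) by simp
  qed
  have "A \<union> B \<subseteq> {0..N}" by (auto simp: A_def B_def)
  then have "sum f {0..N} = sum f ({0..N} - (A \<union> B)) + sum f (A \<union> B)"
    by (rule sum.subset_diff) simp
  also have "\<dots> = sum f A + sum f B"
    unfolding rest add_0_left by (rule sum.union_disjoint[OF finite_A finite_B disjoint])
  finally show ?thesis unfolding sum_B sum.distrib A_def .
qed

lemma geometric_sums_pair:
  fixes z s :: "'a::comm_ring_1"
  shows "(1 - z) * (\<Sum>k=1..n. z^(n - k) + s * z^(n + k)) = (1 - z^n) * (1 + s * z^(n + 1))"
proof -
  have down: "(1 - z) * (\<Sum>k=1..n. z^(n - k)) = 1 - z^n"
    by (simp add: sum.atLeast1_atMost_eq one_diff_power_eq')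
  have up: "(1 - z) * (\<Sum>k=1..n. z^(n + k)) = z^(n + 1) * (1 - z^n)"
    by (simp add: sum.atLeast1_atMost_eq one_diff_power_eq sum_distrib_left power_add mult_ac)
  have "(1 - z) * (\<Sum>k=1..n. z^(n - k) + s * z^(n + k))
      = (1 - z) * (\<Sum>k=1..n. z^(n - k)) + s * ((1 - z) * (\<Sum>k=1..n. z^(n + k)))"
    by (simp add: sum.distrib distrib_left sum_distrib_left mult.left_commute)
  also have "\<dots> = (1 - z^n) * (1 + s * z^(n + 1))"
    unfolding down up by (simp add: algebra_simps)
  finally show ?thesis .
qed

definition mixed_power_sum :: "'a::comm_ring_1 \<Rightarrow> nat \<Rightarrow> nat \<Rightarrow> nat \<Rightarrow> 'a" where
  "mixed_power_sum x p n j = (\<Sum>k=1..n. (x^(2*k))^j * x^((p + 2) * (n - k)))"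

lemma sum_eq_binom_diff_coeff_mixed_power_sums:
  fixes x :: "'a::comm_ring_1"
  shows "(\<Sum>k=1..n. (1 - (x^(2*k))^2) * (1 - x^(2*k))^p * x^((p + 2) * (n - k)))
    = (\<Sum>j=0..p + 2. of_int (binom_diff_coeff p j) * mixed_power_sum x p n j)"
  unfolding one_minus_square_times_power_expansion mixed_power_sum_def atMost_atLeast0
    sum_distrib_left sum_distrib_right
  by (subst sum.swap) (simp only: mult.assoc)

lemma mixed_power_sums_pair:
  fixes x s :: "'a::comm_ring_1"
  assumes "2 * r \<le> p + 2"
  shows "(1 - x^(p + 2 - 2*r)) * (mixed_power_sum x p n r + s * mixed_power_sum x p n (p + 2 - r))
    = x^(2*r*n) * ((1 - x^((p + 2 - 2*r) * n)) * (1 + s * x^((p + 2 - 2*r) * (n + 1))))"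
proof -
  define e where "e = p + 2 - 2*r"
  have p2: "p + 2 = e + 2*r" and pr: "p + 2 - r = e + r" using assms by (simp_all add: e_def)
  have "(x^(2*k))^r * x^((e + 2*r) * (n - k)) + s * ((x^(2*k))^(e + r) * x^((e + 2*r) * (n - k)))
      = x^(2*r*n) * ((x^e)^(n - k) + s * (x^e)^(n + k))" if "k \<in> {1..n}" for k
  proof -
    from that have "k \<le> n" by simp
    then obtain d where n: "n = k + d" using le_Suc_ex by blast
    show ?thesis
      unfolding n by (simp add: algebra_simps flip: power_mult power_add)
  qed
  then have "mixed_power_sum x p n r + s * mixed_power_sum x p n (p + 2 - r)
      = x^(2*r*n) * (\<Sum>k=1..n. (x^e)^(n - k) + s * (x^e)^(n + k))"
    unfolding mixed_power_sum_def pr unfolding p2 sum_distrib_left sum.distrib[symmetric]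
    by (rule sum.cong[OF refl])
  then have "(1 - x^e) * (mixed_power_sum x p n r + s * mixed_power_sum x p n (p + 2 - r))
      = x^(2*r*n) * ((1 - x^e) * (\<Sum>k=1..n. (x^e)^(n - k) + s * (x^e)^(n + k)))"
    by (simp only: mult.left_commute)
  also have "\<dots> = x^(2*r*n) * ((1 - (x^e)^n) * (1 + s * (x^e)^(n + 1)))"
    by (simp only: geometric_sums_pair)
  finally show ?thesis by (simp only: e_def power_mult)
qed

lemma weighted_power_sum_closed_form:
  fixes x :: "'a::field"
  assumes nonzero: "\<And>r. r \<le> (p + 1) div 2 \<Longrightarrow> 1 - x^(p + 2 - 2*r) \<noteq> 0"
  shows "(\<Sum>k=1..n. (1 - (x^(2*k))^2) * (1 - x^(2*k))^p * x^((p + 2) * (n - k)))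
    = (\<Sum>r=0..(p + 1) div 2. of_int (binom_diff_coeff p r) *
         (x^(2*r*n) * ((1 - x^((p + 2 - 2*r) * n)) * (1 + (-1)^(p + 1) * x^((p + 2 - 2*r) * (n + 1)))))
         / (1 - x^(p + 2 - 2*r)))"
proof -
  define c where "c j = (of_int (binom_diff_coeff p j) :: 'a)" for j
  define T where "T = mixed_power_sum x p n"
  have "(\<Sum>k=1..n. (1 - (x^(2*k))^2) * (1 - x^(2*k))^p * x^((p + 2) * (n - k)))
      = (\<Sum>r=0..(p + 1) div 2. c r * T r + c (p + 2 - r) * T (p + 2 - r))"
  proof -
    have "binom_diff_coeff p ((p + 2) div 2) = 0" if "even (p + 2)"
      using that by (intro binom_diff_coeff_middle) simp
    then have "even (p + 2) \<Longrightarrow> c ((p + 2) div 2) * T ((p + 2) div 2) = 0"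
      by (simp only: c_def of_int_0 mult_zero_left)
    from sum_atLeast0_atMost_pairs[of "p + 2" "\<lambda>j. c j * T j", OF _ this] show ?thesis
      unfolding sum_eq_binom_diff_coeff_mixed_power_sums c_def T_def by simp
  qed
  also have "\<dots> = (\<Sum>r=0..(p + 1) div 2. c r *
         (x^(2*r*n) * ((1 - x^((p + 2 - 2*r) * n)) * (1 + (-1)^(p + 1) * x^((p + 2 - 2*r) * (n + 1)))))
         / (1 - x^(p + 2 - 2*r)))"
  proof (rule sum.cong [OF refl])
    fix r assume "r \<in> {0..(p + 1) div 2}"
    then have r: "r \<le> (p + 1) div 2" by simp
    have "c (p + 2 - r) = (-1)^(p + 1) * c r"
      using r binom_diff_coeff_reflect[of r p] by (simp add: c_def)
    then have "c r * T r + c (p + 2 - r) * T (p + 2 - r) = c r * (T r + (-1)^(p + 1) * T (p + 2 - r))"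
      by (simp only: algebra_simps)
    with mixed_power_sums_pair[of r p x n "(-1)^(p + 1)"] nonzero[OF r] r
    show "c r * T r + c (p + 2 - r) * T (p + 2 - r) = c r *
         (x^(2*r*n) * ((1 - x^((p + 2 - 2*r) * n)) * (1 + (-1)^(p + 1) * x^((p + 2 - 2*r) * (n + 1)))))
         / (1 - x^(p + 2 - 2*r))"
      by (simp add: T_def eq_divide_eq mult.commute)
  qed
  finally show ?thesis by (simp add: c_def)
qed

(* No hypothesis on 1 - x^2 or 1 - x^4 is needed: both sides are divided by them in the same
   way, so the identity survives x / 0 = 0. *)
lemma quotient_power_sum_closed_form:
  fixes x :: "'a::field"
  assumes "\<And>r. r \<le> (p + 1) div 2 \<Longrightarrow> 1 - x^(p + 2 - 2*r) \<noteq> 0"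
  shows "(\<Sum>k=1..n. (1 - x^(4*k)) / (1 - x^4) * ((1 - x^(2*k)) / (1 - x^2))^p * x^((p + 2) * (n - k)))
    = (\<Sum>r=0..(p + 1) div 2. of_int (binom_diff_coeff p r) *
         ((1 - x^((p + 2 - 2*r) * n)) * (1 + (-1)^(p + 1) * x^((p + 2 - 2*r) * (n + 1))) * x^(2*r*n))
         / ((1 - x^4) * (1 - x^2)^p * (1 - x^(p + 2 - 2*r))))"
proof -
  define D where "D = (1 - x^4) * (1 - x^2)^p"
  have "(1 - x^(4*k)) / (1 - x^4) * ((1 - x^(2*k)) / (1 - x^2))^p * x^((p + 2) * (n - k))
      = (1 - (x^(2*k))^2) * (1 - x^(2*k))^p * x^((p + 2) * (n - k)) / D" for k
    by (simp add: D_def power_divide flip: power_mult)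
  then have "(\<Sum>k=1..n. (1 - x^(4*k)) / (1 - x^4) * ((1 - x^(2*k)) / (1 - x^2))^p * x^((p + 2) * (n - k)))
      = (\<Sum>k=1..n. (1 - (x^(2*k))^2) * (1 - x^(2*k))^p * x^((p + 2) * (n - k))) / D"
    by (simp only: sum_divide_distrib)
  also have "\<dots> = (\<Sum>r=0..(p + 1) div 2. of_int (binom_diff_coeff p r) *
         (x^(2*r*n) * ((1 - x^((p + 2 - 2*r) * n)) * (1 + (-1)^(p + 1) * x^((p + 2 - 2*r) * (n + 1)))))
         / (1 - x^(p + 2 - 2*r))) / D"
    by (simp only: weighted_power_sum_closed_form[OF assms])
  finally show ?thesis
    unfolding sum_divide_distrib D_def by (simp add: mult_ac)
qed

lemma Fract_of_int: "Fract (of_int k) 1 = (of_int k :: 'a::idom fract)"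
proof (cases k rule: int_diff_cases)
  case (diff a b)
  have "Fract (of_nat a - of_nat b) 1 = Fract (of_nat a) 1 - Fract (of_nat b) (1::'a)" by simp
  then show ?thesis by (simp add: diff Fract_of_nat_eq)
qed

lemma qh_power: "qh ^ e = Fract (monom 1 e) 1"
  by (induction e) (simp_all add: qh_def One_fract_def monom_Suc)

lemma one_minus_qh_power_nonzero:
  assumes "e \<ge> 1"
  shows "1 - qh ^ e \<noteq> 0"
proof -
  have "monom 1 e \<noteq> (1::rat poly)" using assms by (simp add: monom_eq_1_iff)
  then show ?thesis by (simp add: qh_power One_fract_def Zero_fract_def eq_fract)
qed

lemma signed_ibinom_diff_eq_binom_diff_coeff:
  "(-1)^r * Fract [: ibinom (int p) (int r) - ibinom (int p) (int r - 2) :] 1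
     = (of_int (binom_diff_coeff p r) :: ratfun)"
proof -
  define k where "k = int (p choose r) - (if r < 2 then 0 else int (p choose (r - 2)))"
  have "ibinom (int p) (int r) - ibinom (int p) (int r - 2) = of_int k"
    by (simp add: k_def ibinom_def binomial_gbinomial nat_diff_distrib)
  then have "Fract [: ibinom (int p) (int r) - ibinom (int p) (int r - 2) :] 1 = (of_int k :: ratfun)"
    by (simp only: of_int_poly[symmetric] Fract_of_int)
  then show ?thesis
    unfolding binom_diff_coeff_def k_def[symmetric] by simp
qed

theorem lemma2p1:
  fixes m n :: nat
  assumes "m \<ge> 1" and "n \<ge> 1"
  shows "S m n =
    (\<Sum>r=0..m div 2. (-1) ^ r *
       Fract [: ibinom (int m - 1) (int r) - ibinom (int m - 1) (int r - 2) :] 1 *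
       ((1 - qhalf ((m + 1 - 2*r) * n)) *
        (1 + (-1) ^ m * qhalf ((m + 1 - 2*r) * (n + 1))) *
        qhalf (2 * r * n)) /
       ((1 - qhalf 4) * (1 - qhalf 2) ^ (m - 1) * (1 - qhalf (m + 1 - 2*r))))"
proof -
  obtain p where m: "m = p + 1" using assms(1) by (metis le_add_diff_inverse2)
  have shift: "m + 1 = p + 2" "m - 1 = p" "m div 2 = (p + 1) div 2" "int m - 1 = int p"
      "(-1::ratfun)^m = (-1)^(p + 1)"
    by (simp_all add: m)
  show ?thesis
    unfolding S_def qhalf_def shift signed_ibinom_diff_eq_binom_diff_coeff
    by (rule quotient_power_sum_closed_form, rule one_minus_qh_power_nonzero) simp
qed

end
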